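(* Let $A\subseteq[0,1]^d$ be an up-closed $0/1$-polytope and $B\subseteq[0,1]^d$ a convex set with $A\subseteq B$ and $d':=\dim(A)=\dim(B)$. If $d'=1$, then $A=B$. Otherwise, (i) $\operatorname{rdist}(A,B)\geq\frac{1}{d'-1}\cdot\frac{\operatorname{LPgapMin}(A,B)}{1+\operatorname{LPgapMin}(A,B)}$, and (ii) $\operatorname{LPgapMin}(A,B)\geq\frac{\operatorname{rdist}(A,B)}{d'-1-\operatorname{rdist}(A,B)}$.
   Context: A $0/1$-polytope $P\subseteq[0,1]^d$ (all vertices in $\{0,1\}^d$) is up-closed if $x\in P$, $y\in[0,1]^d$, $x\leq y$ imply $y\in P$. $\operatorname{LPgapMin}(A,B)=\inf\{\varepsilon\geq0: \inf_{a\in A}c^\intercal a\leq(1+\varepsilon)\inf_{b\in B}c^\intercal b\ \ \forall c\in\mathbb{R}^d_{\geq0}\}$. For nonempty convex $A\subseteq B\subseteq\mathbb{R}^d$, $\operatorname{rdist}(A,B)=\sup_{\pi}\frac{\sup_{b\in B}\inf_{a\in A}|\pi(b)-\pi(a)|}{\sup_{a,a'\in A}|\pi(a)-\pi(a')|}$ over all linear $\pi:\mathbb{R}^d\to\mathbb{R}$, with fractions having denominator $\infty$ and $0/0$ interpreted as $0$. *)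

theory Defs
  imports "HOL-Analysis.Analysis" "HOL-Library.Extended_Real"
begin

text \<open>The unit cube [0,1]^d, with d the (arbitrary, fixed) cardinality of the index type 'n.\<close>
definition unit_cube :: "(real^'n) set" where
  "unit_cube = {x. \<forall>i. 0 \<le> x$i \<and> x$i \<le> 1}"

definition zero_one_polytope :: "(real^'n) set \<Rightarrow> bool" where
  "zero_one_polytope P \<longleftrightarrow>
     (\<exists>V. V \<noteq> {} \<and> V \<subseteq> {x. \<forall>i. x$i = 0 \<or> x$i = 1} \<and> P = convex hull V)"

definition up_closed :: "(real^'n) set \<Rightarrow> bool" where
  "up_closed P \<longleftrightarrow>
     (\<forall>x\<in>P. \<forall>y\<in>unit_cube. (\<forall>i. x$i \<le> y$i) \<longrightarrow> y \<in> P)"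

text \<open>LPgapMin, valued in the extended reals (infimum of the empty set is \<infinity>).\<close>
definition LPgapMin :: "(real^'n) set \<Rightarrow> (real^'n) set \<Rightarrow> ereal" where
  "LPgapMin A B = Inf {ereal e | e. e \<ge> 0 \<and>
      (\<forall>c::real^'n. (\<forall>i. 0 \<le> c$i) \<longrightarrow>
         Inf ((\<lambda>a. c \<bullet> a) ` A) \<le> (1 + e) * Inf ((\<lambda>b. c \<bullet> b) ` B))}"

definition rfrac :: "ereal \<Rightarrow> ereal \<Rightarrow> ereal" where
  "rfrac num den = (if den = \<infinity> then 0 else if den = 0 then (if num = 0 then 0 else \<infinity>)
                    else num / den)"

definition rdist :: "(real^'n) set \<Rightarrow> (real^'n) set \<Rightarrow> ereal" where
  "rdist A B = (SUP \<pi> \<in> {\<pi> :: real^'n \<Rightarrow> real. linear \<pi>}.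
      rfrac (SUP b\<in>B. INF a\<in>A. ereal \<bar>\<pi> b - \<pi> a\<bar>)
            (SUP a\<in>A. SUP a'\<in>A. ereal \<bar>\<pi> a - \<pi> a'\<bar>))"

end

theory Submission
  imports Defs
begin

(*
  Let S be the set of coordinates in which some vertex of A vanishes. Off S all points of A,
  and since aff A = aff B also all points of B, have coordinate 1, while A contains 1 and the
  affinely independent points 1 - e_i (i in S); hence |S| <= d'.

  (i) If e < LPgapMin, some cost c >= 0 and b in B satisfy (1 + e) c(b) < t <= min_A c.
  Restricted to S and truncated at t, the cost is still >= t on the vertices, hence on A, and
  at most |S| t <= d' t at the point 1, hence on A. So A has width at most (d' - 1) t in
  this direction while b lies below t / (1 + e), which gives rdist >= e / ((1 + e) (d' - 1)).

  (ii) If b in B keeps distance more than x w from A along a functional of width w on A, we may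
  assume (A being convex and containing 1) that b lies below A. Raising the coordinates of
  negative weight to 1 keeps A in itself and turns the functional into a cost c >= 0 supported
  on S, with c_i <= w, whose minimum over A exceeds c(b) by x w. The points 1 - e_i give
  min_A c <= (d' - 1) w, and feasibility of e gives min_A c <= (1 + e) c(b); so x <= e (d' - 1 - x).
*)

lemma linear_eq_inner_vec:
  fixes f :: "real^'n \<Rightarrow> real"
  assumes "linear f"
  shows "f x = (\<chi> i. f (axis i 1)) \<bullet> x"
proof -
  have "f x = f (\<Sum>i\<in>UNIV. x$i *s axis i 1)" by (simp add: basis_expansion)
  also have "\<dots> = (\<Sum>i\<in>UNIV. x$i * f (axis i 1))"
    using assms by (simp add: linear_sum linear_cmul scalar_mult_eq_scaleR)
  also have "\<dots> = (\<chi> i. f (axis i 1)) \<bullet> x" by (simp add: inner_vec_def mult.commute)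
  finally show ?thesis .
qed

lemma inner_vec_nonneg:
  fixes c x :: "real^'n"
  assumes "\<And>i. 0 \<le> c$i" and "\<And>i. 0 \<le> x$i"
  shows "0 \<le> c \<bullet> x"
  unfolding inner_vec_def using assms by (auto intro!: sum_nonneg)

lemma inner_vec_mono_right:
  fixes c x y :: "real^'n"
  assumes "\<And>i. 0 \<le> c$i" and "\<And>i. x$i \<le> y$i"
  shows "c \<bullet> x \<le> c \<bullet> y"
  unfolding inner_vec_def using assms by (auto intro!: sum_mono mult_left_mono)

lemma inner_vec_mono_left:
  fixes c d x :: "real^'n"
  assumes "\<And>i. c$i \<le> d$i" and "\<And>i. 0 \<le> x$i"
  shows "c \<bullet> x \<le> d \<bullet> x"
  unfolding inner_vec_def using assms by (auto intro!: sum_mono mult_right_mono)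

lemma linear_image_avoids_between:
  fixes f :: "'a::real_vector \<Rightarrow> real"
  assumes "linear f" and "convex A" and "z \<in> A" and "a \<in> A"
    and "t \<notin> f ` A" and "t < f z"
  shows "t < f a"
proof (rule ccontr)
  assume "\<not> t < f a"
  moreover have "is_interval (f ` A)"
    using assms(1,2) by (simp add: is_interval_convex_1 convex_linear_image)
  ultimately have "t \<in> f ` A"
    using assms(3,4,6) unfolding is_interval_1 by (meson image_eqI less_imp_le not_less)
  with assms(5) show False ..
qed

(* Passing to the limit in the bounds e / (1 + e) and x / (D - x) of parts (i) and (ii). *)
lemma frac_div_one_plus_le_of_approx:
  fixes g r :: ereal and D :: real
  assumes "0 < D" and "0 \<le> g" and "0 \<le> r"
    and approx: "\<And>e. 0 \<le> e \<Longrightarrow> ereal e < g \<Longrightarrow> ereal (e / (1 + e) / D) \<le> r"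
  shows "ereal (1 / D) * (if g = \<infinity> then 1 else g / (1 + g)) \<le> r"
proof (rule ccontr)
  define \<tau> where "\<tau> = (if g = \<infinity> then 1 else real_of_ereal g / (1 + real_of_ereal g))"
  have \<tau>: "(if g = \<infinity> then 1 else g / (1 + g)) = ereal \<tau>"
    using assms(2) by (cases g) (auto simp: \<tau>_def ereal_divide)
  assume "\<not> ?thesis"
  then have "r < ereal (\<tau> / D)" unfolding \<tau> by simp
  then obtain \<rho> where \<rho>: "r = ereal \<rho>" "\<rho> < \<tau> / D" "0 \<le> \<rho>"
    using assms(3) by (cases r) auto
  define x where "x = \<rho> * D"
  have "0 \<le> real_of_ereal g" using assms(2) by (simp add: real_of_ereal_pos)
  then have x: "0 \<le> x" "x < \<tau>" "\<tau> \<le> 1"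
    using \<rho> assms(1) by (auto simp: x_def \<tau>_def field_simps)
  have "ereal (x / (1 - x)) < g"
  proof (cases g)
    case (real \<gamma>)
    then have "x * (1 + \<gamma>) < \<gamma>" using x assms(2) by (simp add: \<tau>_def field_simps)
    then show ?thesis using real x by (simp add: field_simps)
  qed (use assms(2) in auto)
  then obtain e where e: "x / (1 - x) < e" "ereal e < g"
    using ereal_dense2 by (metis ereal_less(2) less_ereal.simps(1))
  have "x < 1" using x by linarith
  then have "0 \<le> x / (1 - x)" using x(1) by simp
  then have "0 \<le> e" using e(1) by linarith
  moreover have "x * (1 + e) < e" using e(1) \<open>x < 1\<close> by (simp add: field_simps)
  ultimately have "x < e / (1 + e)" by (simp add: field_simps)
  moreover have "e / (1 + e) / D \<le> \<rho>" using approx[OF \<open>0 \<le> e\<close> e(2)] \<rho>(1) by simp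
  then have "e / (1 + e) \<le> x" using assms(1) by (simp only: x_def pos_divide_le_eq)
  ultimately show False by simp
qed

lemma frac_div_diff_le_of_approx:
  fixes g r :: ereal and D :: real
  assumes "0 < D" and "0 \<le> g" and "0 \<le> r"
    and approx: "\<And>x. 0 \<le> x \<Longrightarrow> x < D \<Longrightarrow> ereal x < r \<Longrightarrow> ereal (x / (D - x)) \<le> g"
  shows "(if r = ereal D then \<infinity> else r / (ereal D - r)) \<le> g"
proof (rule ccontr)
  assume "\<not> ?thesis"
  then have less: "g < (if r = ereal D then \<infinity> else r / (ereal D - r))" by simp
  then obtain \<gamma> where \<gamma>: "g = ereal \<gamma>" "0 \<le> \<gamma>" using assms(2) by (cases g) auto
  define x\<^sub>0 where "x\<^sub>0 = \<gamma> * D / (1 + \<gamma>)"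
  have x\<^sub>0: "0 \<le> x\<^sub>0" "x\<^sub>0 < D" using \<gamma>(2) assms(1) by (auto simp: x\<^sub>0_def field_simps)
  have "ereal x\<^sub>0 < r"
  proof (cases "r = ereal D")
    case True
    then show ?thesis using x\<^sub>0 by simp
  next
    case False
    then have lt: "ereal \<gamma> < r / (ereal D - r)" using less \<gamma> by simp
    show ?thesis
    proof (cases r)
      case (real \<rho>)
      show ?thesis
      proof (cases "\<rho> < D")
        case True
        then have "\<gamma> * (D - \<rho>) < \<rho>" using lt real by (simp add: ereal_divide field_simps)
        then show ?thesis using real \<gamma>(2) by (simp add: x\<^sub>0_def field_simps)
      next
        case False
        with real \<open>r \<noteq> ereal D\<close> have "D < \<rho>" by simp
        then have "\<rho> / (D - \<rho>) \<le> 0" using real assms(3) by (simp add: divide_nonneg_neg)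
        then show ?thesis using lt real \<gamma>(2) \<open>D < \<rho>\<close> by (simp add: ereal_divide)
      qed
    qed (use assms(3) lt in auto)
  qed
  then obtain x where x: "ereal x\<^sub>0 < ereal x" "ereal x < min r (ereal D)"
    using ereal_dense2 x\<^sub>0(2) by (metis ereal_less(2) less_ereal.simps(1) min_less_iff_conj)
  then have "0 \<le> x" "x < D" "ereal x < r" using x\<^sub>0 by auto
  moreover have "\<gamma> < x / (D - x)"
  proof -
    have "\<gamma> * D < x * (1 + \<gamma>)" using x(1) \<gamma>(2) by (simp add: x\<^sub>0_def field_simps)
    then show ?thesis using \<open>x < D\<close> by (simp add: field_simps)
  qed
  ultimately show False using approx \<gamma>(1) by fastforce
qed

definition LP_feasible :: "(real^'n) set \<Rightarrow> (real^'n) set \<Rightarrow> real \<Rightarrow> bool" where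
  "LP_feasible A B e \<longleftrightarrow> 0 \<le> e \<and> (\<forall>c::real^'n. (\<forall>i. 0 \<le> c$i) \<longrightarrow>
     Inf ((\<lambda>a. c \<bullet> a) ` A) \<le> (1 + e) * Inf ((\<lambda>b. c \<bullet> b) ` B))"

lemma LPgapMin_nonneg: "0 \<le> LPgapMin A B"
  unfolding LPgapMin_def by (rule Inf_greatest) auto

lemma LPgapMin_le: "LP_feasible A B e \<Longrightarrow> LPgapMin A B \<le> ereal e"
  unfolding LPgapMin_def LP_feasible_def by (rule Inf_lower) auto

lemma LPgapMin_greatest: "(\<And>e. LP_feasible A B e \<Longrightarrow> t \<le> ereal e) \<Longrightarrow> t \<le> LPgapMin A B"
  unfolding LPgapMin_def LP_feasible_def by (rule Inf_greatest) auto

definition rdist_ratio :: "(real^'n) set \<Rightarrow> (real^'n) set \<Rightarrow> (real^'n \<Rightarrow> real) \<Rightarrow> ereal" where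
  "rdist_ratio A B \<pi> = rfrac (SUP b\<in>B. INF a\<in>A. ereal \<bar>\<pi> b - \<pi> a\<bar>) (SUP a\<in>A. SUP a'\<in>A. ereal \<bar>\<pi> a - \<pi> a'\<bar>)"

lemma rdist_ratio_le_rdist: "linear \<pi> \<Longrightarrow> rdist_ratio A B \<pi> \<le> rdist A B"
  unfolding rdist_def rdist_ratio_def by (rule SUP_upper) simp

lemma less_rdist_imp_ratio:
  assumes "t < rdist A B"
  obtains \<pi> where "linear \<pi>" and "t < rdist_ratio A B \<pi>"
  using assms unfolding rdist_def rdist_ratio_def by (auto simp: less_SUP_iff)

lemma rfrac_nonneg: "0 \<le> N \<Longrightarrow> 0 \<le> W \<Longrightarrow> 0 \<le> rfrac N W"
  unfolding rfrac_def by (auto intro: zero_le_divide_ereal)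

lemma rdist_ratio_nonneg:
  assumes "A \<noteq> {}" and "B \<noteq> {}"
  shows "0 \<le> rdist_ratio A B \<pi>"
proof -
  obtain a b where "a \<in> A" "b \<in> B" using assms by blast
  then have "0 \<le> (SUP b\<in>B. INF a\<in>A. ereal \<bar>\<pi> b - \<pi> a\<bar>)"
    and "0 \<le> (SUP a\<in>A. SUP a'\<in>A. ereal \<bar>\<pi> a - \<pi> a'\<bar>)"
    by (auto intro!: SUP_upper2 INF_greatest)
  then show ?thesis unfolding rdist_ratio_def by (rule rfrac_nonneg)
qed

lemma rdist_nonneg: "A \<noteq> {} \<Longrightarrow> B \<noteq> {} \<Longrightarrow> 0 \<le> rdist A B"
  using rdist_ratio_nonneg rdist_ratio_le_rdist[OF linear_zero] by (rule order_trans)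

lemma rdist_ratio_ge:
  assumes "A \<noteq> {}" and "b \<in> B"
    and lower: "\<And>a. a \<in> A \<Longrightarrow> t \<le> \<pi> a"
    and width: "\<And>a a'. a \<in> A \<Longrightarrow> a' \<in> A \<Longrightarrow> \<bar>\<pi> a - \<pi> a'\<bar> \<le> w"
    and "0 < w" and "0 \<le> \<eta>" and "\<pi> b \<le> t - \<eta>"
  shows "ereal (\<eta> / w) \<le> rdist_ratio A B \<pi>"
proof -
  define N where "N = (SUP b\<in>B. INF a\<in>A. ereal \<bar>\<pi> b - \<pi> a\<bar>)"
  define W where "W = (SUP a\<in>A. SUP a'\<in>A. ereal \<bar>\<pi> a - \<pi> a'\<bar>)"
  have N: "ereal \<eta> \<le> N"
    unfolding N_def using lower assms(7)
    by (intro SUP_upper2[OF \<open>b \<in> B\<close>] INF_greatest) fastforce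
  obtain a\<^sub>0 where "a\<^sub>0 \<in> A" using \<open>A \<noteq> {}\<close> by blast
  have W: "0 \<le> W" "W \<le> ereal w"
    unfolding W_def using width
    by (intro SUP_upper2[OF \<open>a\<^sub>0 \<in> A\<close>] SUP_upper2[OF \<open>a\<^sub>0 \<in> A\<close>] SUP_least; simp)+
  consider "\<eta> = 0" | "0 < \<eta>" "W = 0" | w' where "0 < \<eta>" "W = ereal w'" "0 < w'" "w' \<le> w"
    using W \<open>0 \<le> \<eta>\<close> by (cases W) force+
  then have "ereal (\<eta> / w) \<le> rfrac N W"
  proof cases
    case 1
    then show ?thesis using N W rfrac_nonneg[of N W] by (simp add: zero_ereal_def)
  next
    case 2
    then show ?thesis using N by (auto simp: rfrac_def)
  next
    case (3 w')
    have "ereal (\<eta> / w) \<le> ereal (\<eta> / w')" using 3 by (simp add: frac_le)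
    also have "\<dots> = ereal \<eta> / ereal w'" using 3 by (simp add: ereal_divide)
    also have "\<dots> \<le> N / ereal w'" using N 3 by (intro ereal_divide_right_mono) auto
    finally show ?thesis using 3 by (simp add: rfrac_def)
  qed
  then show ?thesis unfolding rdist_ratio_def N_def W_def .
qed

(* The hypothesis const excludes a positive ratio caused by width 0 on A. *)
lemma rdist_ratio_gt_witness:
  assumes "A \<noteq> {}" and "B \<noteq> {}" and "0 \<le> x" and "ereal x < rdist_ratio A B \<pi>"
    and const: "\<And>t b. (\<And>a. a \<in> A \<Longrightarrow> \<pi> a = t) \<Longrightarrow> b \<in> B \<Longrightarrow> \<pi> b = t"
  obtains w b where "0 < w" and "b \<in> B"
    and "\<And>a a'. a \<in> A \<Longrightarrow> a' \<in> A \<Longrightarrow> \<bar>\<pi> a - \<pi> a'\<bar> \<le> w"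
    and "\<And>a. a \<in> A \<Longrightarrow> x * w < \<bar>\<pi> b - \<pi> a\<bar>"
proof -
  define N where "N = (SUP b\<in>B. INF a\<in>A. ereal \<bar>\<pi> b - \<pi> a\<bar>)"
  define W where "W = (SUP a\<in>A. SUP a'\<in>A. ereal \<bar>\<pi> a - \<pi> a'\<bar>)"
  have lt: "ereal x < rfrac N W" using assms(4) by (simp add: rdist_ratio_def N_def W_def)
  obtain a\<^sub>0 b\<^sub>0 where "a\<^sub>0 \<in> A" "b\<^sub>0 \<in> B" using assms(1,2) by blast
  have N0: "0 \<le> N" unfolding N_def by (intro SUP_upper2[OF \<open>b\<^sub>0 \<in> B\<close>] INF_greatest) simp
  have W0: "0 \<le> W"
    unfolding W_def by (intro SUP_upper2[OF \<open>a\<^sub>0 \<in> A\<close>] SUP_upper2[OF \<open>a\<^sub>0 \<in> A\<close>]) simp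
  have width: "ereal \<bar>\<pi> a - \<pi> a'\<bar> \<le> W" if "a \<in> A" "a' \<in> A" for a a'
    unfolding W_def by (intro SUP_upper2[OF that(1)] SUP_upper2[OF that(2)]) simp
  have "W \<noteq> 0"
  proof
    assume "W = 0"
    have "\<pi> a = \<pi> a\<^sub>0" if "a \<in> A" for a
      using width[OF that \<open>a\<^sub>0 \<in> A\<close>] \<open>W = 0\<close> by simp
    then have "\<pi> b = \<pi> a\<^sub>0" if "b \<in> B" for b using const that by blast
    then have "N \<le> 0"
      unfolding N_def by (intro SUP_least INF_lower2[OF \<open>a\<^sub>0 \<in> A\<close>]) auto
    then show False using lt N0 \<open>W = 0\<close> \<open>0 \<le> x\<close> by (simp add: rfrac_def)
  qed
  moreover have "W \<noteq> \<infinity>" using lt \<open>0 \<le> x\<close> by (auto simp: rfrac_def)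
  ultimately obtain w where w: "W = ereal w" "0 < w" using W0 by (cases W) auto
  have "ereal (x * w) < N"
    using lt w N0 by (cases N) (auto simp: rfrac_def ereal_divide field_simps)
  then obtain b where "b \<in> B" and b: "ereal (x * w) < (INF a\<in>A. ereal \<bar>\<pi> b - \<pi> a\<bar>)"
    unfolding N_def by (auto simp: less_SUP_iff)
  show thesis
  proof (rule that[OF \<open>0 < w\<close> \<open>b \<in> B\<close>])
    show "\<bar>\<pi> a - \<pi> a'\<bar> \<le> w" if "a \<in> A" "a' \<in> A" for a a' using width[OF that] w by simp
    show "x * w < \<bar>\<pi> b - \<pi> a\<bar>" if "a \<in> A" for a
      using order.strict_trans2[OF b INF_lower[OF that]] by simp
  qed
qed

locale up_closed_relaxation =
  fixes A B V :: "(real^'n) set"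
  assumes V_nonempty: "V \<noteq> {}"
    and V_01: "V \<subseteq> {x. \<forall>i. x$i = 0 \<or> x$i = 1}"
    and A_eq: "A = convex hull V"
    and up_closed_A: "up_closed A"
    and B_subset_cube: "B \<subseteq> unit_cube"
    and A_subset_B: "A \<subseteq> B"
    and aff_dim_eq: "aff_dim A = aff_dim B"
begin

definition free_coords :: "'n set" where
  "free_coords = {i. \<exists>v\<in>V. v$i = 0}"

lemma convex_A: "convex A"
  unfolding A_eq by (rule convex_convex_hull)

lemma A_nonempty: "A \<noteq> {}"
  using V_nonempty unfolding A_eq by simp

lemma B_nonempty: "B \<noteq> {}"
  using A_nonempty A_subset_B by blast

lemma B_coord_bounds: "b \<in> B \<Longrightarrow> 0 \<le> b$i \<and> b$i \<le> 1"
  using B_subset_cube unfolding unit_cube_def by blast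

lemma A_coord_bounds: "a \<in> A \<Longrightarrow> 0 \<le> a$i \<and> a$i \<le> 1"
  using A_subset_B B_coord_bounds by blast

lemma inner_const_on_B:
  assumes "\<And>a. a \<in> A \<Longrightarrow> q \<bullet> a = s" and "b \<in> B"
  shows "q \<bullet> b = s"
proof -
  have "affine hull A \<subseteq> {x. q \<bullet> x = s}"
    using assms(1) by (intro hull_minimal) (auto simp: affine_hyperplane)
  moreover have "affine hull B = affine hull A"
    using aff_dim_eq_full_gen[OF A_subset_B] aff_dim_eq by simp
  ultimately show ?thesis using hull_inc[OF \<open>b \<in> B\<close>, of affine] by auto
qed

lemma A_coord_eq_one:
  assumes "a \<in> A" and "j \<notin> free_coords"
  shows "a$j = 1"
proof -
  have "convex hull V \<subseteq> {x. axis j 1 \<bullet> x = 1}"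
  proof (rule hull_minimal)
    show "V \<subseteq> {x. axis j 1 \<bullet> x = 1}"
      using V_01 assms(2) unfolding free_coords_def by (auto simp: inner_axis')
  qed (rule convex_hyperplane)
  then show ?thesis using assms(1) unfolding A_eq by (auto simp: inner_axis')
qed

lemma B_coord_eq_one: "b \<in> B \<Longrightarrow> j \<notin> free_coords \<Longrightarrow> b$j = 1"
  using inner_const_on_B[of "axis j 1" 1 b] A_coord_eq_one by (simp add: inner_axis')

lemma mem_A_if_above:
  assumes "a \<in> A" and "y \<in> unit_cube" and "\<And>i. a$i \<le> y$i"
  shows "y \<in> A"
  using up_closed_A assms unfolding up_closed_def by blast

lemma one_mem_A: "1 \<in> A"
proof -
  obtain a where "a \<in> A" using A_nonempty by blast
  then show ?thesis
    by (rule mem_A_if_above) (use A_coord_bounds[OF \<open>a \<in> A\<close>] in \<open>auto simp: unit_cube_def\<close>)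
qed

lemma one_minus_axis_mem_A:
  assumes "i \<in> free_coords"
  shows "1 - axis i 1 \<in> A"
proof -
  obtain v where v: "v \<in> V" "v$i = 0" using assms unfolding free_coords_def by blast
  have "v \<in> A" using v(1) unfolding A_eq by (rule hull_inc)
  then show ?thesis
    by (rule mem_A_if_above) (use v A_coord_bounds[OF \<open>v \<in> A\<close>] in \<open>auto simp: unit_cube_def axis_def\<close>)
qed

lemma card_free_coords_le: "int (card free_coords) \<le> aff_dim A"
proof -
  let ?E = "(\<lambda>i. 1 - axis i 1) ` free_coords :: (real^'n) set"
  have "1 \<notin> ?E"
  proof
    assume "1 \<in> ?E"
    then obtain i where "(1::real^'n) = 1 - axis i (1::real)" by blast
    then have "(1::real^'n) $ i = (1 - axis i (1::real)) $ i" by simp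
    then show False by simp
  qed
  have "independent ((\<lambda>i. axis i (1::real)) ` free_coords)"
    by (rule independent_mono[OF independent_Basis]) auto
  then have "independent (uminus ` (\<lambda>i. axis i (1::real)) ` free_coords)"
    by (rule linear_independent_injective_image[OF linear_uminus]) (auto intro: inj_onI)
  moreover have "uminus ` (\<lambda>i. axis i 1) ` free_coords = (\<lambda>x. - 1 + x) ` ?E"
    by (auto simp: image_image)
  ultimately have "\<not> affine_dependent (insert 1 ?E)"
    by (simp add: affine_dependent_iff_dependent[OF \<open>1 \<notin> ?E\<close>])
  moreover have "insert 1 ?E \<subseteq> A" using one_mem_A one_minus_axis_mem_A by auto
  ultimately have "int (card (insert 1 ?E)) \<le> aff_dim A + 1"
    by (rule independent_card_le_aff_dim[rotated])
  moreover have "inj_on (\<lambda>i. 1 - axis i (1::real)) free_coords"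
    by (auto intro!: inj_onI simp: vec_eq_iff axis_def) (metis zero_neq_one)
  ultimately show ?thesis using \<open>1 \<notin> ?E\<close> by (simp add: card_image)
qed

lemma eq_if_aff_dim_one:
  assumes "aff_dim A = 1"
  shows "A = B"
proof
  have "free_coords \<noteq> {}"
  proof
    assume "free_coords = {}"
    then have "A = {1}" using one_mem_A A_coord_eq_one by (auto simp: vec_eq_iff)
    with assms show False by simp
  qed
  moreover have "card free_coords \<le> 1" using card_free_coords_le assms by simp
  ultimately have "card free_coords = 1" by (simp add: card_gt_0_iff Suc_leI le_antisym)
  then obtain i where i: "free_coords = {i}" by (rule card_1_singletonE)
  show "B \<subseteq> A"
  proof
    fix b assume "b \<in> B"
    show "b \<in> A"
    proof (rule mem_A_if_above[OF one_minus_axis_mem_A])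
      show "i \<in> free_coords" using i by simp
      show "b \<in> unit_cube" using \<open>b \<in> B\<close> B_subset_cube by blast
      show "(1 - axis i 1) $ j \<le> b $ j" for j
        using B_coord_eq_one[OF \<open>b \<in> B\<close>, of j] B_coord_bounds[OF \<open>b \<in> B\<close>, of j] i
        by (auto simp: axis_def)
    qed
  qed
qed (rule A_subset_B)

lemma aff_dim_ne_one_cases:
  assumes "aff_dim A \<noteq> 1"
  obtains "aff_dim A = 0" | "2 \<le> aff_dim A"
  using assms aff_dim_geq[of A] aff_dim_empty[of A] A_nonempty by linarith

lemma bdd_below_inner_image:
  assumes "\<And>i. 0 \<le> c$i" and "X \<subseteq> B"
  shows "bdd_below ((\<lambda>x. c \<bullet> x) ` X)"
  using assms B_coord_bounds by (intro bdd_belowI[of _ 0]) (auto intro!: inner_vec_nonneg)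

lemma Inf_inner_le_iff:
  assumes "\<And>i. 0 \<le> c$i" and "0 \<le> e"
  shows "Inf ((\<lambda>a. c \<bullet> a) ` A) \<le> (1 + e) * Inf ((\<lambda>b. c \<bullet> b) ` B) \<longleftrightarrow>
    (\<forall>b\<in>B. \<forall>t. (\<forall>a\<in>A. t \<le> c \<bullet> a) \<longrightarrow> t \<le> (1 + e) * (c \<bullet> b))"
    (is "?m\<^sub>A \<le> (1 + e) * ?m\<^sub>B \<longleftrightarrow> _")
proof safe
  fix b t assume "?m\<^sub>A \<le> (1 + e) * ?m\<^sub>B" "b \<in> B" "\<forall>a\<in>A. t \<le> c \<bullet> a"
  moreover have "t \<le> ?m\<^sub>A"
    using \<open>\<forall>a\<in>A. t \<le> c \<bullet> a\<close> A_nonempty by (auto intro: cInf_greatest)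
  moreover have "?m\<^sub>B \<le> c \<bullet> b"
    using \<open>b \<in> B\<close> assms(1) by (intro cInf_lower bdd_below_inner_image) auto
  moreover have "(1 + e) * ?m\<^sub>B \<le> (1 + e) * (c \<bullet> b)"
    using \<open>?m\<^sub>B \<le> c \<bullet> b\<close> assms(2) by (simp add: mult_left_mono)
  ultimately show "t \<le> (1 + e) * (c \<bullet> b)" by linarith
next
  assume bound: "\<forall>b\<in>B. \<forall>t. (\<forall>a\<in>A. t \<le> c \<bullet> a) \<longrightarrow> t \<le> (1 + e) * (c \<bullet> b)"
  have "\<forall>a\<in>A. ?m\<^sub>A \<le> c \<bullet> a"
    using assms(1) A_subset_B by (auto intro!: cInf_lower bdd_below_inner_image)
  then have "?m\<^sub>A / (1 + e) \<le> c \<bullet> b" if "b \<in> B" for b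
    using bound that assms(2) by (simp add: pos_divide_le_eq mult.commute)
  then have "?m\<^sub>A / (1 + e) \<le> ?m\<^sub>B"
    using B_nonempty by (auto intro: cInf_greatest)
  then have "?m\<^sub>A \<le> ?m\<^sub>B * (1 + e)"
    using assms(2) by (simp add: pos_divide_le_eq)
  then show "?m\<^sub>A \<le> (1 + e) * ?m\<^sub>B"
    by (simp add: mult.commute)
qed

lemma LP_feasibleD:
  assumes "LP_feasible A B e" and "\<And>i. 0 \<le> c$i" and "b \<in> B" and "\<And>a. a \<in> A \<Longrightarrow> t \<le> c \<bullet> a"
  shows "t \<le> (1 + e) * (c \<bullet> b)"
proof -
  have "0 \<le> e" and "Inf ((\<lambda>a. c \<bullet> a) ` A) \<le> (1 + e) * Inf ((\<lambda>b. c \<bullet> b) ` B)"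
    using assms(1,2) unfolding LP_feasible_def by auto
  then show ?thesis using Inf_inner_le_iff[OF assms(2)] assms(3,4) by blast
qed

lemma not_LP_feasibleE:
  assumes "\<not> LP_feasible A B e" and "0 \<le> e"
  obtains c b t where "\<forall>i. 0 \<le> c$i" and "b \<in> B" and "\<forall>a\<in>A. t \<le> c \<bullet> a"
    and "(1 + e) * (c \<bullet> b) < t"
proof -
  from assms obtain c where c: "\<forall>i. 0 \<le> c$i"
    and "\<not> Inf ((\<lambda>a. c \<bullet> a) ` A) \<le> (1 + e) * Inf ((\<lambda>b. c \<bullet> b) ` B)"
    unfolding LP_feasible_def by blast
  then obtain b t where "b \<in> B" "\<forall>a\<in>A. t \<le> c \<bullet> a" "\<not> t \<le> (1 + e) * (c \<bullet> b)"
    using Inf_inner_le_iff[of c e] \<open>0 \<le> e\<close> by auto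
  with c show thesis by (intro that[of c b t]) auto
qed

definition restrict_free :: "real^'n \<Rightarrow> real^'n" where
  "restrict_free c = (\<chi> j. if j \<in> free_coords then c$j else 0)"

lemma inner_restrict_free:
  assumes "b \<in> B"
  shows "c \<bullet> b = restrict_free c \<bullet> b + (\<Sum>j\<in>-free_coords. c$j)"
proof -
  have "c \<bullet> b = (\<Sum>j\<in>UNIV.
      (if j \<in> free_coords then c$j else 0) * b$j + (if j \<in> free_coords then 0 else c$j))"
    unfolding inner_vec_def using B_coord_eq_one[OF assms] by (intro sum.cong) auto
  then show ?thesis
    by (simp add: restrict_free_def inner_vec_def sum.distrib sum.If_cases Compl_eq_Diff_UNIV)
qed

lemma violation_restrict_free:
  assumes "\<forall>i. 0 \<le> c$i" and "0 \<le> e" and "b \<in> B"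
    and "(1 + e) * (c \<bullet> b) < t" and "\<forall>a\<in>A. t \<le> c \<bullet> a"
  obtains t' where "(1 + e) * (restrict_free c \<bullet> b) < t'"
    and "\<forall>a\<in>A. t' \<le> restrict_free c \<bullet> a"
proof
  let ?K = "\<Sum>j\<in>-free_coords. c$j"
  have "0 \<le> ?K" using assms(1) by (simp add: sum_nonneg)
  then have "0 \<le> e * ?K" using assms(2) by simp
  moreover have "(1 + e) * (c \<bullet> b) = (1 + e) * (restrict_free c \<bullet> b) + ?K + e * ?K"
    using inner_restrict_free[OF \<open>b \<in> B\<close>, of c] by (simp add: algebra_simps)
  ultimately show "(1 + e) * (restrict_free c \<bullet> b) < t - ?K"
    using assms(4) by linarith
  show "\<forall>a\<in>A. t - ?K \<le> restrict_free c \<bullet> a"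
  proof
    fix a assume "a \<in> A"
    then show "t - ?K \<le> restrict_free c \<bullet> a"
      using assms(5) \<open>a \<in> A\<close> inner_restrict_free[of a c] A_subset_B by fastforce
  qed
qed

lemma inner_one_eq_sum_free:
  assumes "\<And>j. j \<notin> free_coords \<Longrightarrow> c$j = 0"
  shows "c \<bullet> 1 = (\<Sum>j\<in>free_coords. c$j)"
  unfolding inner_vec_def using assms by (simp add: sum.mono_neutral_right)

lemma inner_one_le_card_free:
  assumes "\<And>j. j \<notin> free_coords \<Longrightarrow> c$j = 0" and "\<And>j. j \<in> free_coords \<Longrightarrow> c$j \<le> s"
  shows "c \<bullet> 1 \<le> real (card free_coords) * s"
proof -
  have "c \<bullet> 1 = (\<Sum>j\<in>free_coords. c$j)" using assms(1) by (rule inner_one_eq_sum_free)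
  also have "\<dots> \<le> real (card free_coords) * s"
    using assms(2) sum_bounded_above[of free_coords "\<lambda>j. c$j" s] by simp
  finally show ?thesis .
qed

lemma truncated_cost_ge:
  assumes "\<And>i. 0 \<le> c$i" and "0 \<le> t" and lower: "\<And>a. a \<in> A \<Longrightarrow> t \<le> c \<bullet> a" and "a \<in> A"
  shows "t \<le> (\<chi> j. min (c$j) t) \<bullet> a"
proof -
  let ?c = "\<chi> j. min (c$j) t"
  have "t \<le> ?c \<bullet> v" if "v \<in> V" for v
  proof -
    have v01: "v$j = 0 \<or> v$j = 1" for j using V_01 \<open>v \<in> V\<close> by blast
    show ?thesis
    proof (cases "\<exists>i. v$i = 1 \<and> t \<le> c$i")
      case True
      then obtain i where "v$i = 1" "t \<le> c$i" by blast
      have "0 \<le> ?c$j * v$j" for j using v01[of j] assms(1,2) by auto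
      then have "?c$i * v$i \<le> (\<Sum>j\<in>UNIV. ?c$j * v$j)" by (intro member_le_sum) auto
      then show ?thesis using \<open>v$i = 1\<close> \<open>t \<le> c$i\<close> by (simp add: inner_vec_def)
    next
      case False
      have "?c$j * v$j = c$j * v$j" for j
        using v01[of j] False by (cases "v$j = 0") auto
      then have "?c \<bullet> v = c \<bullet> v" unfolding inner_vec_def inner_real_def by presburger
      moreover have "v \<in> A" using \<open>v \<in> V\<close> unfolding A_eq by (rule hull_inc)
      ultimately show ?thesis using lower by simp
    qed
  qed
  then have "convex hull V \<subseteq> {x. t \<le> ?c \<bullet> x}"
    by (intro hull_minimal) (auto intro: convex_halfspace_ge)
  with \<open>a \<in> A\<close> show ?thesis unfolding A_eq by blast
qed

lemma rdist_ge_of_violation: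
  assumes "\<And>i. 0 \<le> c$i" and supp: "\<And>j. j \<notin> free_coords \<Longrightarrow> c$j = 0"
    and "0 \<le> e" and "b \<in> B" and viol: "(1 + e) * (c \<bullet> b) < t"
    and lower: "\<And>a. a \<in> A \<Longrightarrow> t \<le> c \<bullet> a" and "2 \<le> aff_dim A"
  shows "ereal (e / (1 + e) / (real_of_int (aff_dim A) - 1)) \<le> rdist A B"
proof -
  define D where "D = real_of_int (aff_dim A) - 1"
  define c' :: "real^'n" where "c' = (\<chi> j. min (c$j) t)"
  have "0 \<le> c \<bullet> b"
    using assms(1) B_coord_bounds[OF \<open>b \<in> B\<close>] by (intro inner_vec_nonneg) auto
  then have "0 \<le> (1 + e) * (c \<bullet> b)" using \<open>0 \<le> e\<close> by simp
  then have "0 < t" using viol by linarith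
  have c'_nonneg: "0 \<le> c'$i" for i using assms(1) \<open>0 < t\<close> by (simp add: c'_def)
  have c'_lower: "t \<le> c' \<bullet> a" if "a \<in> A" for a
    unfolding c'_def using assms(1) \<open>0 < t\<close> lower that by (intro truncated_cost_ge) auto
  have "c' \<bullet> 1 \<le> real (card free_coords) * t"
    using supp \<open>0 < t\<close> by (intro inner_one_le_card_free) (auto simp: c'_def)
  also have "\<dots> \<le> (D + 1) * t"
    using card_free_coords_le \<open>0 < t\<close> by (intro mult_right_mono) (auto simp: D_def)
  finally have c'_upper: "c' \<bullet> a \<le> (D + 1) * t" if "a \<in> A" for a
    using c'_nonneg A_coord_bounds[OF that] inner_vec_mono_right[of c' a 1] by force
  have width: "\<bar>c' \<bullet> a - c' \<bullet> a'\<bar> \<le> D * t" if "a \<in> A" "a' \<in> A" for a a'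
    using c'_lower[OF that(1)] c'_lower[OF that(2)] c'_upper[OF that(1)] c'_upper[OF that(2)]
    by (simp add: algebra_simps abs_le_iff)
  have "c' \<bullet> b \<le> c \<bullet> b"
    using B_coord_bounds[OF \<open>b \<in> B\<close>] by (intro inner_vec_mono_left) (auto simp: c'_def)
  also have "\<dots> \<le> t - t * e / (1 + e)"
    using viol \<open>0 \<le> e\<close> by (simp add: field_simps)
  finally have "ereal (t * e / (1 + e) / (D * t)) \<le> rdist_ratio A B (\<lambda>x. c' \<bullet> x)"
    using \<open>0 < t\<close> \<open>0 \<le> e\<close> \<open>2 \<le> aff_dim A\<close> A_nonempty \<open>b \<in> B\<close> c'_lower width
    by (intro rdist_ratio_ge) (auto simp: D_def)
  also have "\<dots> \<le> rdist A B" by (intro rdist_ratio_le_rdist bounded_linear.linear[OF bounded_linear_inner_right])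
  finally show ?thesis using \<open>0 < t\<close> by (simp add: D_def)
qed

lemma rdist_ge_if_not_LP_feasible:
  assumes "\<not> LP_feasible A B e" and "0 \<le> e" and "2 \<le> aff_dim A"
  shows "ereal (e / (1 + e) / (real_of_int (aff_dim A) - 1)) \<le> rdist A B"
proof -
  obtain c b t where c: "\<forall>i. 0 \<le> c$i" and "b \<in> B"
    and "\<forall>a\<in>A. t \<le> c \<bullet> a" and "(1 + e) * (c \<bullet> b) < t"
    using assms(1,2) by (rule not_LP_feasibleE)
  then obtain t' where "(1 + e) * (restrict_free c \<bullet> b) < t'"
    and "\<forall>a\<in>A. t' \<le> restrict_free c \<bullet> a"
    using \<open>0 \<le> e\<close> by (blast intro: violation_restrict_free)
  then show ?thesis
    using c assms(2,3) \<open>b \<in> B\<close> by (intro rdist_ge_of_violation) (auto simp: restrict_free_def)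
qed

(* Raising the coordinates where q is negative to 1 keeps a point in A and turns q into the
   nonnegative cost pos_cost q, up to the constant neg_offset q. *)
definition pos_cost :: "real^'n \<Rightarrow> real^'n" where
  "pos_cost q = (\<chi> j. if j \<in> free_coords then max (q$j) 0 else 0)"

definition neg_offset :: "real^'n \<Rightarrow> real" where
  "neg_offset q = (\<Sum>j\<in>UNIV. if j \<in> free_coords then min (q$j) 0 else q$j)"

definition raise_neg :: "real^'n \<Rightarrow> real^'n \<Rightarrow> real^'n" where
  "raise_neg q a = (\<chi> j. if j \<in> free_coords \<and> q$j < 0 then 1 else a$j)"

lemma raise_neg_mem_A: "a \<in> A \<Longrightarrow> raise_neg q a \<in> A"
  by (rule mem_A_if_above) (use A_coord_bounds in \<open>auto simp: unit_cube_def raise_neg_def\<close>)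

lemma inner_raise_neg:
  assumes "a \<in> A"
  shows "q \<bullet> raise_neg q a = pos_cost q \<bullet> a + neg_offset q"
  unfolding inner_vec_def inner_real_def neg_offset_def sum.distrib[symmetric]
proof (rule sum.cong[OF refl])
  fix j
  show "q$j * raise_neg q a $ j = pos_cost q $ j * a$j + (if j \<in> free_coords then min (q$j) 0 else q$j)"
    using A_coord_eq_one[OF assms, of j]
    by (cases "j \<in> free_coords"; cases "q$j < 0") (auto simp: pos_cost_def raise_neg_def)
qed

lemma inner_ge_pos_cost:
  assumes "b \<in> B"
  shows "pos_cost q \<bullet> b + neg_offset q \<le> q \<bullet> b"
  unfolding inner_vec_def inner_real_def neg_offset_def sum.distrib[symmetric]
proof (rule sum_mono)
  fix j
  show "pos_cost q $ j * b$j + (if j \<in> free_coords then min (q$j) 0 else q$j) \<le> q$j * b$j"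
    using B_coord_eq_one[OF assms, of j] B_coord_bounds[OF assms, of j]
    by (cases "j \<in> free_coords"; cases "q$j < 0")
      (auto simp: pos_cost_def mult_left_le_one_le mult_le_cancel_left1)
qed

lemma lower_bound_le_width:
  assumes supp: "\<And>j. j \<notin> free_coords \<Longrightarrow> c$j = 0"
    and bound: "\<And>i. i \<in> free_coords \<Longrightarrow> c$i \<le> w" and "0 \<le> w" and "1 \<le> aff_dim A"
    and lower: "\<And>a. a \<in> A \<Longrightarrow> t \<le> c \<bullet> a"
  shows "t \<le> (real_of_int (aff_dim A) - 1) * w"
proof (cases "free_coords = {}")
  case True
  then have "t \<le> 0" using lower[OF one_mem_A] inner_one_eq_sum_free[OF supp] by simp
  also have "0 \<le> (real_of_int (aff_dim A) - 1) * w" using assms(3,4) by simp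
  finally show ?thesis .
next
  case False
  define k where "k = real (card free_coords)"
  have "1 \<le> k" using False by (simp add: k_def Suc_leI card_gt_0_iff)
  have sum_c: "c \<bullet> 1 = (\<Sum>i\<in>free_coords. c$i)" by (rule inner_one_eq_sum_free[OF supp])
  have "k * t = (\<Sum>i\<in>free_coords. t)" by (simp add: k_def)
  also have "\<dots> \<le> (\<Sum>i\<in>free_coords. c \<bullet> 1 - c$i)"
    using lower[OF one_minus_axis_mem_A] by (intro sum_mono) (simp add: inner_diff_right inner_axis)
  also have "\<dots> = (k - 1) * (c \<bullet> 1)" by (simp add: sum_subtractf sum_c k_def algebra_simps)
  also have "\<dots> \<le> (k - 1) * (k * w)"
    using sum_c bound sum_bounded_above[of free_coords "\<lambda>i. c$i" w] \<open>1 \<le> k\<close>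
    by (intro mult_left_mono) (auto simp: k_def)
  finally have "t \<le> (k - 1) * w" using \<open>1 \<le> k\<close> by (simp add: mult.left_commute)
  also have "\<dots> \<le> (real_of_int (aff_dim A) - 1) * w"
    using card_free_coords_le \<open>0 \<le> w\<close> by (intro mult_right_mono) (auto simp: k_def)
  finally show ?thesis .
qed

lemma LP_feasible_bound_of_gap:
  assumes "b \<in> B" and "0 < w" and "0 \<le> x" and "LP_feasible A B e" and "1 \<le> aff_dim A"
    and gap: "\<And>a. a \<in> A \<Longrightarrow> x * w < q \<bullet> a - q \<bullet> b"
    and width: "\<And>a a'. a \<in> A \<Longrightarrow> a' \<in> A \<Longrightarrow> \<bar>q \<bullet> a - q \<bullet> a'\<bar> \<le> w"
  shows "x \<le> e * (real_of_int (aff_dim A) - 1 - x)"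
proof -
  define c where "c = pos_cost q"
  have c_nonneg: "0 \<le> c$i" for i by (simp add: c_def pos_cost_def)
  have supp: "c$j = 0" if "j \<notin> free_coords" for j using that by (simp add: c_def pos_cost_def)
  have "c$i \<le> w" if "i \<in> free_coords" for i
  proof -
    have "c$i = c \<bullet> 1 - c \<bullet> (1 - axis i 1)" by (simp add: inner_diff_right inner_axis)
    also have "\<dots> = q \<bullet> raise_neg q 1 - q \<bullet> raise_neg q (1 - axis i 1)"
      using one_mem_A one_minus_axis_mem_A[OF that] by (simp add: inner_raise_neg c_def)
    also have "\<dots> \<le> w"
      using width[OF raise_neg_mem_A[OF one_mem_A, of q] raise_neg_mem_A[OF one_minus_axis_mem_A[OF that], of q]]
      by simp
    finally show ?thesis .
  qed
  moreover have lower: "c \<bullet> b + x * w \<le> c \<bullet> a" if "a \<in> A" for a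
    using gap[OF raise_neg_mem_A[OF that, of q]] inner_raise_neg[OF that, of q]
      inner_ge_pos_cost[OF \<open>b \<in> B\<close>, of q]
    unfolding c_def by linarith
  ultimately have "c \<bullet> b + x * w \<le> (real_of_int (aff_dim A) - 1) * w"
    using supp \<open>0 < w\<close> \<open>1 \<le> aff_dim A\<close> by (intro lower_bound_le_width) auto
  moreover have "c \<bullet> b + x * w \<le> (1 + e) * (c \<bullet> b)"
    using \<open>LP_feasible A B e\<close> c_nonneg \<open>b \<in> B\<close> lower by (rule LP_feasibleD)
  moreover have "0 \<le> e" using \<open>LP_feasible A B e\<close> by (simp add: LP_feasible_def)
  ultimately have "x * w \<le> e * (c \<bullet> b)" "c \<bullet> b \<le> (real_of_int (aff_dim A) - 1 - x) * w"
    by (simp_all add: algebra_simps)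
  then have "x * w \<le> e * ((real_of_int (aff_dim A) - 1 - x) * w)"
    using \<open>0 \<le> e\<close> by (meson mult_left_mono order_trans)
  then show ?thesis using \<open>0 < w\<close> by (simp add: mult.assoc[symmetric])
qed

lemma LP_feasible_bound_of_rdist:
  assumes "ereal x < rdist A B" and "0 \<le> x" and "LP_feasible A B e" and "1 \<le> aff_dim A"
  shows "x \<le> e * (real_of_int (aff_dim A) - 1 - x)"
proof -
  obtain \<pi> where "linear \<pi>" and "ereal x < rdist_ratio A B \<pi>"
    using assms(1) by (rule less_rdist_imp_ratio)
  define p where "p = (\<chi> i. \<pi> (axis i 1))"
  have \<pi>_eq: "\<pi> y = p \<bullet> y" for y unfolding p_def by (rule linear_eq_inner_vec[OF \<open>linear \<pi>\<close>])
  obtain w b where "0 < w" and "b \<in> B"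
    and width: "\<And>a a'. a \<in> A \<Longrightarrow> a' \<in> A \<Longrightarrow> \<bar>p \<bullet> a - p \<bullet> a'\<bar> \<le> w"
    and gap: "\<And>a. a \<in> A \<Longrightarrow> x * w < \<bar>p \<bullet> b - p \<bullet> a\<bar>"
  proof (rule rdist_ratio_gt_witness[OF A_nonempty B_nonempty \<open>0 \<le> x\<close> \<open>ereal x < rdist_ratio A B \<pi>\<close>])
    show "\<pi> b = s" if "\<And>a. a \<in> A \<Longrightarrow> \<pi> a = s" and "b \<in> B" for s b
      using inner_const_on_B[of p s b] that unfolding \<pi>_eq by blast
  qed (auto simp: \<pi>_eq)
  have "0 \<le> x * w" using \<open>0 \<le> x\<close> \<open>0 < w\<close> by simp
  obtain q where q: "q = p \<or> q = - p" and "q \<bullet> b < q \<bullet> 1"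
  proof (cases "p \<bullet> b < p \<bullet> 1")
    case False
    then have "- p \<bullet> b < - p \<bullet> 1" using gap[OF one_mem_A] \<open>0 \<le> x * w\<close> by auto
    then show ?thesis using that[of "- p"] by simp
  qed (use that[of p] in simp)
  have gap_q: "\<bar>q \<bullet> b - q \<bullet> a\<bar> = \<bar>p \<bullet> b - p \<bullet> a\<bar>" for a using q by auto
  have "x * w < q \<bullet> a - q \<bullet> b" if "a \<in> A" for a
  proof -
    have "q \<bullet> b \<noteq> q \<bullet> a'" if "a' \<in> A" for a'
      using gap[OF that] gap_q[of a'] \<open>0 \<le> x * w\<close> by auto
    then have "q \<bullet> b \<notin> (\<lambda>y. q \<bullet> y) ` A" by blast
    then have "q \<bullet> b < q \<bullet> a"
      by (rule linear_image_avoids_between[OF bounded_linear.linear[OF bounded_linear_inner_right]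
            convex_A one_mem_A that _ \<open>q \<bullet> b < q \<bullet> 1\<close>])
    then show ?thesis using gap[OF that] gap_q[of a] by simp
  qed
  moreover have "\<bar>q \<bullet> a - q \<bullet> a'\<bar> \<le> w" if "a \<in> A" "a' \<in> A" for a a'
    using width[OF that] q by auto
  ultimately show ?thesis
    by (rule LP_feasible_bound_of_gap[OF \<open>b \<in> B\<close> \<open>0 < w\<close> \<open>0 \<le> x\<close> assms(3,4)])
qed

lemma rdist_lower_bound:
  assumes "aff_dim A \<noteq> 1"
  shows "ereal (1 / (real_of_int (aff_dim A) - 1)) *
      (if LPgapMin A B = \<infinity> then 1 else LPgapMin A B / (1 + LPgapMin A B)) \<le> rdist A B"
  using assms
proof (cases rule: aff_dim_ne_one_cases)
  case 1
  have "0 \<le> (if LPgapMin A B = \<infinity> then 1 else LPgapMin A B / (1 + LPgapMin A B))"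
    using LPgapMin_nonneg[of A B] by (auto intro: zero_le_divide_ereal)
  then have "ereal (1 / (real_of_int (aff_dim A) - 1)) *
      (if LPgapMin A B = \<infinity> then 1 else LPgapMin A B / (1 + LPgapMin A B)) \<le> 0"
    using 1 by (auto simp: ereal_mult_le_0_iff)
  also have "0 \<le> rdist A B" using A_nonempty B_nonempty by (rule rdist_nonneg)
  finally show ?thesis .
next
  case 2
  show ?thesis
  proof (rule frac_div_one_plus_le_of_approx)
    show "0 < real_of_int (aff_dim A) - 1" using 2 by simp
    show "0 \<le> LPgapMin A B" by (rule LPgapMin_nonneg)
    show "0 \<le> rdist A B" using A_nonempty B_nonempty by (rule rdist_nonneg)
    fix e assume "0 \<le> e" and "ereal e < LPgapMin A B"
    then have "\<not> LP_feasible A B e" using LPgapMin_le by (meson not_le)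
    then show "ereal (e / (1 + e) / (real_of_int (aff_dim A) - 1)) \<le> rdist A B"
      using \<open>0 \<le> e\<close> 2 by (rule rdist_ge_if_not_LP_feasible)
  qed
qed

lemma LPgapMin_lower_bound:
  assumes "aff_dim A \<noteq> 1"
  shows "(if rdist A B = ereal (real_of_int (aff_dim A) - 1) then \<infinity>
      else rdist A B / (ereal (real_of_int (aff_dim A) - 1) - rdist A B)) \<le> LPgapMin A B"
  using assms
proof (cases rule: aff_dim_ne_one_cases)
  case 1
  have "0 \<le> rdist A B" using A_nonempty B_nonempty by (rule rdist_nonneg)
  then have "rdist A B / (ereal (- 1) - rdist A B) \<le> 0"
    by (cases "rdist A B") (auto simp: ereal_divide divide_nonneg_neg)
  also have "0 \<le> LPgapMin A B" by (rule LPgapMin_nonneg)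
  finally show ?thesis using 1 \<open>0 \<le> rdist A B\<close> by auto
next
  case 2
  show ?thesis
  proof (rule frac_div_diff_le_of_approx)
    show "0 < real_of_int (aff_dim A) - 1" using 2 by simp
    show "0 \<le> LPgapMin A B" by (rule LPgapMin_nonneg)
    show "0 \<le> rdist A B" using A_nonempty B_nonempty by (rule rdist_nonneg)
    fix x assume "0 \<le> x" "x < real_of_int (aff_dim A) - 1" "ereal x < rdist A B"
    show "ereal (x / (real_of_int (aff_dim A) - 1 - x)) \<le> LPgapMin A B"
    proof (rule LPgapMin_greatest)
      fix e assume "LP_feasible A B e"
      then have "x \<le> e * (real_of_int (aff_dim A) - 1 - x)"
        using \<open>ereal x < rdist A B\<close> \<open>0 \<le> x\<close> 2 by (intro LP_feasible_bound_of_rdist) auto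
      then show "ereal (x / (real_of_int (aff_dim A) - 1 - x)) \<le> ereal e"
        using \<open>x < real_of_int (aff_dim A) - 1\<close> by (simp add: pos_divide_le_eq)
    qed
  qed
qed

end

theorem mainTheorem6:
  fixes A B :: "(real^'n) set"
  assumes "zero_one_polytope A" and "up_closed A"
    and "convex B" and "B \<subseteq> unit_cube" and "A \<subseteq> B"
    and "aff_dim A = aff_dim B"
  shows "(aff_dim A = 1 \<longrightarrow> A = B) \<and>
         (aff_dim A \<noteq> 1 \<longrightarrow>
            rdist A B \<ge> ereal (1 / (real_of_int (aff_dim A) - 1)) *
                (if LPgapMin A B = \<infinity> then 1 else LPgapMin A B / (1 + LPgapMin A B))
          \<and> LPgapMin A B \<ge>
                (if rdist A B = ereal (real_of_int (aff_dim A) - 1) then \<infinity>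
                 else rdist A B / (ereal (real_of_int (aff_dim A) - 1) - rdist A B)))"
proof -
  obtain V where "V \<noteq> {}" "V \<subseteq> {x. \<forall>i. x$i = 0 \<or> x$i = 1}" "A = convex hull V"
    using assms(1) unfolding zero_one_polytope_def by blast
  then interpret up_closed_relaxation A B V
    using assms(2,4-6) by unfold_locales
  show ?thesis
    using eq_if_aff_dim_one rdist_lower_bound LPgapMin_lower_bound by blast
qed

end
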